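(* Both sequences $(S_m)_{m\ge0}$ and $(P_m)_{m\ge0}$ are log-convex, i.e. for each of them $a_m\ge0$ for all $m\ge0$ and $a_{m-1}a_{m+1}\ge a_m^2$ for all $m\ge1$.
   Context: $(S_n)_{n\ge0}$ is the integer sequence defined by $S_0=1$, $S_1=4$ and $(n+1)^2S_{n+1}=4(3n^2+3n+1)S_n-32n^2S_{n-1}$ for $n\ge1$; equivalently $S_n=\sum_{k=0}^n\binom nk\binom{2k}k\binom{2n-2k}{n-k}$. The Catalan–Larcombe–French numbers are $P_n=2^nS_n$ (equivalently $P_0=1$, $P_1=8$, $(n+1)^2P_{n+1}=8(3n^2+3n+1)P_n-128n^2P_{n-1}$ for $n\ge1$). *)

theory Defs
  imports Main
begin

definition S :: "nat \<Rightarrow> int" where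
  "S n = (\<Sum>k=0..n. int (n choose k) * int ((2*k) choose k) * int ((2*n-2*k) choose (n-k)))"

definition P :: "nat \<Rightarrow> int" where
  "P n = 2^n * S n"

definition log_convex :: "(nat \<Rightarrow> int) \<Rightarrow> bool" where
  "log_convex a \<longleftrightarrow> (\<forall>m. a m \<ge> 0) \<and> (\<forall>m\<ge>1. a (m-1) * a (m+1) \<ge> (a m)^2)"

end

theory Submission
  imports Defs Complex_Main
begin

text \<open>The recurrence is proved by creative telescoping: the recurrence operator applied to the
  \<open>k\<close>-th summand of \<open>S n\<close> equals \<open>G(n,k+1) - G(n,k)\<close> for a certificate \<open>G\<close> that is a
  rational multiple of the \<open>(k-1)\<close>-th summand, so summing over \<open>k\<close> gives zero. By induction the
  recurrence yields the ratio bounds \<open>4 S(n) \<le> S(n+1)\<close> and, for \<open>n \<ge> 4\<close>,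
  \<open>(n+1) S(n+1) \<le> 8n S(n)\<close>. Eliminating \<open>S(n+1)\<close> by the recurrence turns
  \<open>(4n-8)\<^sup>2 (n+1)\<^sup>2 (S(n-1) S(n+1) - S(n)\<^sup>2)\<close> into a quadratic form with nonnegative
  coefficients in the nonnegative slacks of these bounds; the cases \<open>n \<le> 4\<close> are checked
  numerically. The factor \<open>2\<^sup>n\<close> in \<open>P\<close> cancels from the log-convexity inequality.\<close>

text \<open>The summand \<open>(n choose k) (2k choose k) (2n-2k choose n-k)\<close> of \<open>S n\<close> in the
  coordinates \<open>i = k\<close>, \<open>j = n - k\<close>, where its neighbours differ by rational factors.\<close>

definition S_term :: "nat \<Rightarrow> nat \<Rightarrow> real" where
  "S_term i j = fact (i+j) * fact (2*i) * fact (2*j) / (fact i ^ 3 * fact j ^ 3)"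

lemma S_term_pos: "S_term i j > 0"
  unfolding S_term_def by simp

lemma S_term_Suc_left:
  "S_term (Suc i) j = S_term i j * (2*(real i+real j+1)*(2*real i+1)/(real i+1)^2)"
proof -
  have "fact (Suc i + j) = (real i + real j + 1) * fact (i+j)"
    "fact (2 * Suc i) = 2 * (real i + 1) * (2*real i + 1) * fact (2*i)"
    "fact (Suc i) = (real i + 1) * fact i"
    by (simp_all add: algebra_simps)
  then show ?thesis
    unfolding S_term_def
    by (simp add: divide_simps power2_eq_square power3_eq_cube del: fact_Suc)
      (simp add: algebra_simps)
qed

lemma S_term_commute: "S_term i j = S_term j i"
  unfolding S_term_def by (simp add: ac_simps)

lemma S_term_Suc_right:
  "S_term i (Suc j) = S_term i j * (2*(real i+real j+1)*(2*real j+1)/(real j+1)^2)"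
  using S_term_Suc_left[of j i] by (simp add: S_term_commute add.commute)

lemma S_term_eq_binomials:
  "S_term i j = real ((i+j) choose i) * real ((2*i) choose i) * real ((2*j) choose j)"
  by (simp add: S_term_def binomial_fact field_simps power3_eq_cube mult_2)

definition S_summand :: "nat \<Rightarrow> nat \<Rightarrow> real" where
  "S_summand n k = (if k \<le> n then S_term k (n-k) else 0)"

text \<open>Zeilberger's certificate for the recurrence; its odd denominator never vanishes.\<close>

definition S_cert :: "nat \<Rightarrow> nat \<Rightarrow> real" where
  "S_cert n k = (if k = 0 \<or> n+1 < k then 0 else
     S_summand n (k-1)
       * (8*real n*real k^2 - (8*real n^2+8*real n-4)*real k + 4*real n^2 + 2*real n - 2)
       / (2*real n - 2*real k + 1))"

lemma S_summand_recurrence_telescopes: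
  assumes "1 \<le> n" "k \<le> n + 1"
  shows "(real n+1)^2 * S_summand (n+1) k - 4*(3*real n^2+3*real n+1) * S_summand n k
           + 32*real n^2 * S_summand (n-1) k
       = S_cert n (Suc k) - S_cert n k"
proof -
  obtain m where n: "n = Suc m" using assms by (cases n) auto
  consider "k = 0" | i j where "k = Suc i" "n = i + j + 2" | "k = n" | "k = n + 1"
  proof (cases k)
    case (Suc i)
    show ?thesis
    proof (cases "i + 1 < n")
      case True
      then have "n = i + (n - i - 2) + 2" by simp
      with Suc that(2) show ?thesis by blast
    next
      case False
      with Suc assms that(3,4) show ?thesis by linarith
    qed
  qed (use that in simp)
  then show ?thesis
  proof cases
    case 1
    have "S_term 0 m > 0" by (rule S_term_pos)
    then show ?thesis unfolding 1 n
      by (simp add: S_summand_def S_cert_def S_term_Suc_right divide_simps) algebra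
  next
    case 2
    have "S_term i j > 0" by (rule S_term_pos)
    then show ?thesis unfolding 2
      by (simp add: S_summand_def S_cert_def S_term_Suc_left S_term_Suc_right divide_simps) algebra
  next
    case 3
    have "S_term m 0 > 0" by (rule S_term_pos)
    then show ?thesis unfolding 3 n
      by (simp add: S_summand_def S_cert_def S_term_Suc_left S_term_Suc_right divide_simps) algebra
  next
    case 4
    have "S_term (Suc m) 0 > 0" by (rule S_term_pos)
    then show ?thesis unfolding 4 n
      by (simp add: S_summand_def S_cert_def S_term_Suc_left divide_simps) algebra
  qed
qed

lemma real_S_eq_sum_S_summand:
  assumes "n \<le> m"
  shows "real_of_int (S n) = (\<Sum>k=0..m. S_summand n k)"
proof -
  have "real_of_int (S n) = (\<Sum>k=0..n. S_summand n k)"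
    unfolding S_def of_int_sum
    by (rule sum.cong) (auto simp: S_summand_def S_term_eq_binomials mult_2 diff_add_inverse2)
  also have "\<dots> = (\<Sum>k=0..m. S_summand n k)"
    using assms by (intro sum.mono_neutral_left) (auto simp: S_summand_def)
  finally show ?thesis .
qed

lemma S_recurrence:
  assumes "1 \<le> n"
  shows "(int n + 1)^2 * S (n+1) = 4*(3*int n^2 + 3*int n + 1) * S n - 32*int n^2 * S (n-1)"
proof -
  have sums: "real_of_int (S (n+1)) = (\<Sum>k=0..n+1. S_summand (n+1) k)"
    "real_of_int (S n) = (\<Sum>k=0..n+1. S_summand n k)"
    "real_of_int (S (n-1)) = (\<Sum>k=0..n+1. S_summand (n-1) k)"
    by (rule real_S_eq_sum_S_summand; simp)+
  have "(real n+1)^2 * S (n+1) - 4*(3*real n^2+3*real n+1) * S n + 32*real n^2 * S (n-1)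
      = (\<Sum>k=0..n+1. (real n+1)^2 * S_summand (n+1) k
                       - 4*(3*real n^2+3*real n+1) * S_summand n k
                       + 32*real n^2 * S_summand (n-1) k)"
    unfolding sums by (simp only: sum.distrib sum_subtractf sum_distrib_left)
  also have "\<dots> = (\<Sum>k=0..n+1. S_cert n (Suc k) - S_cert n k)"
    using assms by (intro sum.cong refl S_summand_recurrence_telescopes) auto
  also have "\<dots> = 0"
    by (subst sum_Suc_diff) (simp_all add: S_cert_def)
  finally have "real_of_int ((int n + 1)^2 * S (n+1))
      = real_of_int (4*(3*int n^2 + 3*int n + 1) * S n - 32*int n^2 * S (n-1))"
    by simp
  then show ?thesis by (simp only: of_int_eq_iff)
qed

lemma S_recurrence_shifted:
  "(int n + 2)^2 * S (n+2) = 4*(3*(int n+1)^2 + 3*(int n+1) + 1) * S (n+1) - 32*(int n+1)^2 * S n"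
  using S_recurrence[of "Suc n"] by (simp add: add_ac)

lemma S_0: "S 0 = 1" and S_1: "S 1 = 4"
  by (simp_all add: S_def)

lemma S_2_to_5: "S 2 = 20" "S 3 = 112" "S 4 = 676" "S 5 = 4304"
proof -
  show 2: "S 2 = 20" using S_recurrence[of 1] S_0 S_1 by (simp add: eval_nat_numeral)
  show 3: "S 3 = 112" using S_recurrence[of 2] S_1 2 by (simp add: eval_nat_numeral)
  show 4: "S 4 = 676" using S_recurrence[of 3] 2 3 by (simp add: eval_nat_numeral)
  show "S 5 = 4304" using S_recurrence[of 4] 3 4 by (simp add: eval_nat_numeral)
qed

lemma S_pos_and_growth: "0 < S n \<and> 4 * S n \<le> S (n+1)"
proof (induction n)
  case 0
  show ?case using S_0 S_1 by simp
next
  case (Suc n)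
  have "(int n + 2)^2 * (S (n+2) - 4 * S (n+1))
      = 8*(int n+1)^2 * (S (n+1) - 4 * S n) + 4*(int n+1) * S (n+1)"
    using S_recurrence_shifted[of n] by algebra
  also have "\<dots> \<ge> 0"
    using Suc.IH by simp
  finally have "S (n+2) - 4 * S (n+1) \<ge> 0"
    by (simp add: zero_le_mult_iff)
  with Suc.IH show ?case by simp
qed

lemma S_ratio_upper:
  assumes "4 \<le> n"
  shows "(int n + 1) * S (n+1) \<le> 8 * int n * S n"
  using assms
proof (induction n rule: nat_induct_at_least)
  case base
  show ?case by (simp add: S_2_to_5)
next
  case (Suc n)
  have "int n * (int n + 2) * (8 * (int n + 1) * S (n+1) - (int n + 2) * S (n+2))
      = 4 * S (n+1) + 4*(int n + 1)^2 * (8 * int n * S n - (int n + 1) * S (n+1))"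
    using S_recurrence_shifted[of n] by algebra
  also have "\<dots> \<ge> 0"
    using Suc.IH S_pos_and_growth[of "n+1"] by simp
  finally have "0 \<le> int n * (int n + 2) * (8 * (int n + 1) * S (n+1) - (int n + 2) * S (n+2))" .
  moreover have "int n * (int n + 2) > 0"
    using Suc.hyps by simp
  ultimately have "8 * (int n + 1) * S (n+1) - (int n + 2) * S (n+2) \<ge> 0"
    by (auto simp: zero_le_mult_iff)
  then show ?case by (simp add: algebra_simps)
qed

lemma three_term_log_convex_step:
  fixes k a b c :: int
  assumes rec: "(k+1)^2 * c = 4*(3*k^2 + 3*k + 1) * b - 32*k^2 * a"
    and k: "3 \<le> k" and lower: "4 * a \<le> b" and upper: "k * b \<le> 8 * (k-1) * a"
  shows "b^2 \<le> a * c"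
proof -
  define t where "t = b - 4 * a"
  define w where "w = 8 * (k-1) * a - k * b"
  have "(4*k - 8)^2 * (k+1)^2 * (a*c - b^2)
      = (64*k^2 - 32*k - 64) * t^2 + (16*k^3 - 16*k^2 + 16*k + 32) * (t * w) + 16*k * w^2"
    unfolding t_def w_def using rec by algebra
  also have "\<dots> \<ge> 0"
  proof -
    have "3 * k \<le> k * k"
      using k by (intro mult_right_mono) auto
    then have "64*k^2 - 32*k - 64 \<ge> 0"
      using k unfolding power2_eq_square by linarith
    moreover have "16*k^3 - 16*k^2 + 16*k + 32 = 16*k^2*(k-1) + 16*k + 32"
      by (simp add: algebra_simps power2_eq_square power3_eq_cube)
    then have "16*k^3 - 16*k^2 + 16*k + 32 \<ge> 0"
      using k by simp
    moreover have "t \<ge> 0" "w \<ge> 0"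
      using lower upper by (simp_all add: t_def w_def)
    ultimately show ?thesis
      using k by (intro add_nonneg_nonneg mult_nonneg_nonneg) auto
  qed
  finally have "0 \<le> (4*k - 8)^2 * (k+1)^2 * (a*c - b^2)" .
  moreover have "0 < (4*k - 8)^2 * (k+1)^2"
    using k by simp
  ultimately show ?thesis
    by (simp add: zero_le_mult_iff)
qed

lemma S_log_convex: "log_convex S"
  unfolding log_convex_def
proof (intro conjI allI impI)
  show "0 \<le> S m" for m
    using S_pos_and_growth[of m] by simp
next
  fix m :: nat
  assume "1 \<le> m"
  show "(S m)^2 \<le> S (m-1) * S (m+1)"
  proof (cases "m \<le> 4")
    case True
    with \<open>1 \<le> m\<close> have "m = 1 \<or> m = 2 \<or> m = 3 \<or> m = 4" by auto
    then show ?thesis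
      using S_0 S_1 S_2_to_5 by (auto simp: eval_nat_numeral)
  next
    case False
    have "(int m + 1)^2 * S (m+1) = 4*(3*int m^2 + 3*int m + 1) * S m - 32*int m^2 * S (m-1)"
      using S_recurrence \<open>1 \<le> m\<close> by blast
    moreover have "4 * S (m-1) \<le> S m"
      using S_pos_and_growth[of "m-1"] \<open>1 \<le> m\<close> by simp
    moreover have "int m * S m \<le> 8 * (int m - 1) * S (m-1)"
      using S_ratio_upper[of "m-1"] False by simp
    ultimately show ?thesis
      using False by (intro three_term_log_convex_step) auto
  qed
qed

lemma log_convex_power_mult:
  assumes "log_convex a" "0 \<le> c"
  shows "log_convex (\<lambda>n. c^n * a n)"
  unfolding log_convex_def
proof (intro conjI allI impI)
  show "0 \<le> c^m * a m" for m
    using assms by (simp add: log_convex_def)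
next
  fix m :: nat
  assume m: "1 \<le> m"
  have "(m-1) + (m+1) = m + m"
    using m by simp
  then have "(c^m * a m)^2 = c^(m-1) * c^(m+1) * (a m)^2"
    by (metis power_add power2_eq_square power_mult_distrib)
  also have "\<dots> \<le> c^(m-1) * c^(m+1) * (a (m-1) * a (m+1))"
    using assms m by (intro mult_left_mono) (auto simp: log_convex_def)
  also have "\<dots> = c^(m-1) * a (m-1) * (c^(m+1) * a (m+1))"
    by (simp add: ac_simps)
  finally show "(c^m * a m)^2 \<le> c^(m-1) * a (m-1) * (c^(m+1) * a (m+1))" .
qed

theorem corollary4p1:
  shows "log_convex S \<and> log_convex P"
proof
  show "log_convex S" by (rule S_log_convex)
  have "P = (\<lambda>n. 2^n * S n)"
    by (simp add: P_def fun_eq_iff)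
  then show "log_convex P"
    using log_convex_power_mult[OF S_log_convex, of 2] by simp
qed
end
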